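(* Let $(X,\pi)$ be a finite symmetric two-player game with relative payoff game $(X,\Delta)$. If $X$ is a totally ordered set and $\Delta$ has increasing differences, or has decreasing differences, or is a valuation, then imitation is essentially unbeatable.
   Context: $\pi(x,y)$ is the payoff of the player choosing $x$ against $y$. Relative payoff: $\Delta(x,y)=\pi(x,y)-\pi(y,x)$. For totally ordered $X$, $\Delta$ has decreasing (resp. increasing) differences if for all $x''>x'$ and $y''>y'$ in $X$, $\Delta(x'',y'')-\Delta(x',y'')\le$ (resp. $\ge$) $\Delta(x'',y')-\Delta(x',y')$; $\Delta$ is a valuation if it has both. Let $\hat\Delta:=\max_{x,y\in X}\Delta(x,y)$. Imitate-the-best: given initial $y_0\in X$ and any opponent sequence $(x_t)_{t\ge0}$, $y_t=x_{t-1}$ if $\Delta(x_{t-1},y_{t-1})>0$ and $y_t=y_{t-1}$ otherwise. Imitation is essentially unbeatable if for every $y_0\in X$ and every sequence $(x_t)$, $\limsup_{T\to\infty}\sum_{t=0}^T\Delta(x_t,y_t)\le\hat\Delta$. *)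

theory Defs
  imports Complex_Main "HOL-Library.Extended_Real" "HOL-Library.Liminf_Limsup"
begin

text \<open>A finite symmetric two-player game on a finite totally ordered strategy set is
  modelled by a strategy type of class finite and linorder, and a payoff function
  pi, where pi x y is the payoff of the player choosing x against y.\<close>

definition rel_payoff :: "('a \<Rightarrow> 'a \<Rightarrow> real) \<Rightarrow> 'a \<Rightarrow> 'a \<Rightarrow> real" where
  "rel_payoff \<pi> x y = \<pi> x y - \<pi> y x"

definition decreasing_differences :: "('a::linorder \<Rightarrow> 'a \<Rightarrow> real) \<Rightarrow> bool" where
  "decreasing_differences D \<longleftrightarrow>
     (\<forall>x' x'' y' y''. x'' > x' \<longrightarrow> y'' > y' \<longrightarrow>
        D x'' y'' - D x' y'' \<le> D x'' y' - D x' y')"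

definition increasing_differences :: "('a::linorder \<Rightarrow> 'a \<Rightarrow> real) \<Rightarrow> bool" where
  "increasing_differences D \<longleftrightarrow>
     (\<forall>x' x'' y' y''. x'' > x' \<longrightarrow> y'' > y' \<longrightarrow>
        D x'' y'' - D x' y'' \<ge> D x'' y' - D x' y')"

definition valuation :: "('a::linorder \<Rightarrow> 'a \<Rightarrow> real) \<Rightarrow> bool" where
  "valuation D \<longleftrightarrow> decreasing_differences D \<and> increasing_differences D"

definition max_rel_payoff :: "('a::finite \<Rightarrow> 'a \<Rightarrow> real) \<Rightarrow> real" where
  "max_rel_payoff D = Max {D x y | x y. True}"

fun imitate :: "('a \<Rightarrow> 'a \<Rightarrow> real) \<Rightarrow> 'a \<Rightarrow> (nat \<Rightarrow> 'a) \<Rightarrow> nat \<Rightarrow> 'a" where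
  "imitate D y0 x 0 = y0"
| "imitate D y0 x (Suc t) =
     (if D (x t) (imitate D y0 x t) > 0 then x t else imitate D y0 x t)"

definition essentially_unbeatable :: "('a::finite \<Rightarrow> 'a \<Rightarrow> real) \<Rightarrow> bool" where
  "essentially_unbeatable \<pi> \<longleftrightarrow>
     (\<forall>y0 (x :: nat \<Rightarrow> 'a).
        limsup (\<lambda>T. ereal (\<Sum>t\<le>T. rel_payoff \<pi> (x t) (imitate (rel_payoff \<pi>) y0 x t)))
          \<le> ereal (max_rel_payoff (rel_payoff \<pi>)))"

end

theory Submission
  imports Defs
begin

text \<open>A relative payoff is skew-symmetric. For a skew-symmetric function on a totally ordered set,
  increasing and decreasing differences are equivalent (swap the roles of the two arguments), so
  either one makes it a valuation. A skew-symmetric valuation is a potential difference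
  \<open>\<Delta> x y = f x - f y\<close>; along an imitation path every positive term \<open>\<Delta>(x\<^sub>t, y\<^sub>t)\<close> equals the
  increase \<open>f y\<^sub>t\<^sub>+\<^sub>1 - f y\<^sub>t\<close>, and the other terms are \<open>\<le> 0\<close>, so the partial sums telescope to at most
  \<open>f y\<^sub>T\<^sub>+\<^sub>1 - f y\<^sub>0 = \<Delta>(y\<^sub>T\<^sub>+\<^sub>1, y\<^sub>0) \<le> \<Delta>\<^sup>^\<close>.\<close>

lemma rel_payoff_skew: "rel_payoff \<pi> y x = - rel_payoff \<pi> x y"
  by (simp add: rel_payoff_def)

lemma increasing_differences_iff_decreasing_differences_skew:
  assumes skew: "\<And>x y. D y x = - D x y"
  shows "increasing_differences D \<longleftrightarrow> decreasing_differences D"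
proof -
  have swap: "D x'' y'' - D x' y'' - (D x'' y' - D x' y') =
              - (D y'' x'' - D y' x'' - (D y'' x' - D y' x'))" for x' x'' y' y''
    using skew[of x'' y''] skew[of x' y''] skew[of x'' y'] skew[of x' y'] by simp
  show ?thesis
    unfolding increasing_differences_def decreasing_differences_def
    by (smt (verit) swap)
qed

lemma valuation_constant_differences:
  fixes D :: "'a::linorder \<Rightarrow> 'a \<Rightarrow> real"
  assumes "valuation D"
  shows "D x y - D x' y = D x y' - D x' y'"
proof -
  have ordered: "D x y - D x' y = D x y' - D x' y'" if "x > x'" "y > y'" for x x' y y'
    using assms that unfolding valuation_def increasing_differences_def decreasing_differences_def
    by (meson antisym)
  show ?thesis
    by (cases x x' rule: linorder_cases; cases y y' rule: linorder_cases)
      (use ordered in \<open>force+\<close>)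
qed

lemma skew_valuation_potential:
  fixes D :: "'a::linorder \<Rightarrow> 'a \<Rightarrow> real"
  assumes "valuation D" and skew: "\<And>x y. D y x = - D x y"
  shows "D x y = D x m - D y m"
  using valuation_constant_differences[OF assms(1), of x y m m] skew[of y m] skew[of m m] by simp

lemma sum_imitate_potential_le:
  assumes potential: "\<And>x y. D x y = f x - f y"
  shows "(\<Sum>t\<le>T. D (x t) (imitate D y0 x t)) \<le> f (imitate D y0 x (Suc T)) - f y0"
proof -
  have step: "D (x t) (imitate D y0 x t) \<le> f (imitate D y0 x (Suc t)) - f (imitate D y0 x t)" for t
    using potential[of "x t" "imitate D y0 x t"] by auto
  show ?thesis
  proof (induction T)
    case 0
    then show ?case using step[of 0] by simp
  next
    case (Suc T)
    then show ?case using step[of "Suc T"] by simp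
  qed
qed

lemma le_max_rel_payoff:
  fixes D :: "'a::finite \<Rightarrow> 'a \<Rightarrow> real"
  shows "D x y \<le> max_rel_payoff D"
proof -
  have "{D x y | x y. True} = case_prod D ` UNIV" by auto
  then have "finite {D x y | x y. True}" by simp
  then show ?thesis unfolding max_rel_payoff_def by (rule Max_ge) auto
qed

theorem corollary4:
  fixes \<pi> :: "'a::{finite,linorder} \<Rightarrow> 'a \<Rightarrow> real"
  assumes "increasing_differences (rel_payoff \<pi>) \<or> decreasing_differences (rel_payoff \<pi>)
           \<or> valuation (rel_payoff \<pi>)"
  shows "essentially_unbeatable \<pi>"
  unfolding essentially_unbeatable_def
proof (intro allI)
  fix y0 and x :: "nat \<Rightarrow> 'a"
  let ?D = "rel_payoff \<pi>"
  let ?y = "imitate ?D y0 x"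
  have "valuation ?D"
    using assms increasing_differences_iff_decreasing_differences_skew[of ?D, OF rel_payoff_skew]
    unfolding valuation_def by blast
  then have potential: "?D a b = ?D a y0 - ?D b y0" for a b
    by (rule skew_valuation_potential[OF _ rel_payoff_skew])
  have "(\<Sum>t\<le>T. ?D (x t) (?y t)) \<le> max_rel_payoff ?D" for T
  proof -
    have "(\<Sum>t\<le>T. ?D (x t) (?y t)) \<le> ?D (?y (Suc T)) y0 - ?D y0 y0"
      by (rule sum_imitate_potential_le[where f = "\<lambda>a. ?D a y0", OF potential])
    also have "\<dots> \<le> max_rel_payoff ?D"
      using le_max_rel_payoff[of ?D] by (simp add: rel_payoff_def)
    finally show ?thesis .
  qed
  then show "limsup (\<lambda>T. ereal (\<Sum>t\<le>T. ?D (x t) (?y t))) \<le> ereal (max_rel_payoff ?D)"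
    by (intro Limsup_bounded) auto
qed

end
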